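(* (1) If $\psi(x)\ge c_0\sqrt x$ on $[0,1]$ for some $c_0>0$, then there exists $C\ge1$ (depending on $\psi,\delta_0$) such that for all $\delta\in(0,\delta_0]$ and $(x_N,x_T)\in\mathbb C^2$, \[ \max(|x_N|,|x_T|)\le\kappa_{G_\psi}(p_\delta;(x_N,x_T))\le C\max(|x_N|,|x_T|). \] (2) If $\frac{\psi(x)}{\sqrt x}$ is an increasing function on $(0,1)$ (and $\psi$ is strictly increasing), there exists $c>0$ such that for all $\delta\in(0,\delta_0]$ and all $(x_N,x_T)\in\mathbb C^2$ with $x_N\neq0$ and $|x_T|\le|x_N|$, \[ c\,F_2\!\left(\delta,\left|\frac{x_T}{x_N}\right|\right)|x_N|\le\kappa_{G_\psi}(p_\delta;(x_N,x_T)),\qquad F_2(\delta,t):=\min\left(\frac{\sqrt{\psi^{-1}(\delta)}}{\delta},\ \frac{t}{\psi(t^2)}\right). \]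
   Context: $\mathbb D$ is the unit disc in $\mathbb C$. $\psi:[0,1]\to[0,\infty)$ is continuous with $\psi(0)=0$, $\psi(1)>0$, and $G_\psi:=\{z\in\mathbb D^2:\Re z_1<\psi(|z_2|)\}$. For $\delta\in(0,1)$, $p_\delta:=(-\delta,0)$. Standing assumption: $\delta\in(0,\delta_0]$ for a fixed $\delta_0<1$ with $\delta_0<\psi(1)$, $\psi^{-1}$ the inverse of $\psi$. The Kobayashi–Royden metric of a domain $\Omega\subset\mathbb C^d$ is $\kappa_\Omega(z;X)=\inf\{\lambda^{-1}:\lambda>0,\ \exists\varphi:\mathbb D\to\Omega \text{ holomorphic},\ \varphi(0)=z,\ \varphi'(0)=\lambda X\}$. For $t$ with $t/\psi(t^2)$ undefined because $\psi(t^2)=0$, interpret the quotient as $+\infty$. *)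

theory Defs
  imports "HOL-Analysis.Analysis"
begin

definition G_psi :: "(real \<Rightarrow> real) \<Rightarrow> (complex \<times> complex) set" where
  "G_psi \<psi> = {z. norm (fst z) < 1 \<and> norm (snd z) < 1 \<and> Re (fst z) < \<psi> (norm (snd z))}"

definition p_delta :: "real \<Rightarrow> complex \<times> complex" where
  "p_delta \<delta> = (complex_of_real (- \<delta>), 0)"

definition kobayashi :: "(complex \<times> complex) set \<Rightarrow> complex \<times> complex \<Rightarrow> complex \<times> complex \<Rightarrow> real" where
  "kobayashi \<Omega> z X = Inf {1 / r | r. r > 0 \<and>
     (\<exists>\<phi> :: complex \<Rightarrow> complex \<times> complex.
        (\<lambda>w. fst (\<phi> w)) holomorphic_on ball 0 1 \<and>
        (\<lambda>w. snd (\<phi> w)) holomorphic_on ball 0 1 \<and>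
        \<phi> ` ball 0 1 \<subseteq> \<Omega> \<and> \<phi> 0 = z \<and>
        deriv (\<lambda>w. fst (\<phi> w)) 0 = complex_of_real r * fst X \<and>
        deriv (\<lambda>w. snd (\<phi> w)) 0 = complex_of_real r * snd X)}"

text \<open>F_2(delta,t) = min(sqrt(psi^-1 delta)/delta, t/psi(t^2)), the second term read as +infinity
  when psi(t^2) = 0.  psi^-1 is the inverse of psi on [0,1].\<close>
definition F2 :: "(real \<Rightarrow> real) \<Rightarrow> real \<Rightarrow> real \<Rightarrow> real" where
  "F2 \<psi> \<delta> t = (let a = sqrt (the_inv_into {0..1} \<psi> \<delta>) / \<delta> in
     if \<psi> (t^2) = 0 then a else min a (t / \<psi> (t^2)))"

end

theory Submission
  imports Defs "HOL-Complex_Analysis.Complex_Analysis"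
begin

text \<open>A disc (f, g) through p_delta in G_psi maps into the bidisc, so Schwarz-Pick
  gives |f'(0)|, |g'(0)| \<le> 1.  For the finer bound put t = |x_T / x_N| and y = psi^-1 delta.  The
  second-order Schwarz lemma gives |g z| \<le> |z| (3|z| + |g'(0)|) with |g'(0)| \<le> t |f'(0)| \<le> t, so on
  the disc of radius R = max (sqrt y, t) / 4 we have |g| \<le> max (y, t^2) and hence
  Re f < psi (max (y, t^2)); a Borel-Caratheodory type estimate then gives |f'(0)| \<le> 16 / F2.

  If psi x \<ge> c0 sqrt x, the polynomial disc w \<mapsto> (-delta + \<alpha> w, \<beta> w + u w^2 / 2)
  with |\<alpha>|, |\<beta>| \<le> rho and a suitable unimodular u stays in G_psi: the quadratic term keeps
  c0 sqrt |z2| above Re (\<alpha> w).\<close>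

lemma Schwarz_Pick_deriv_0:
  fixes f :: "complex \<Rightarrow> complex"
  assumes holf: "f holomorphic_on ball 0 1" and into: "\<And>z. norm z < 1 \<Longrightarrow> norm (f z) < 1"
  shows "norm (deriv f 0) \<le> 1 - (norm (f 0))\<^sup>2"
proof -
  define a where "a = f 0"
  define h where "h = Moebius_function 0 a \<circ> f"
  have a: "norm a < 1" using into[of 0] by (simp add: a_def)
  have den_eq: "1 - cnj a * a = of_real (1 - (norm a)\<^sup>2)"
    by (simp add: complex_norm_square[symmetric] mult.commute)
  have a2: "(norm a)\<^sup>2 < 1" using a by (simp add: power_less_one_iff)
  then have den: "1 - cnj a * a \<noteq> 0" unfolding den_eq of_real_eq_0_iff by linarith
  have holh: "h holomorphic_on ball 0 1"
    unfolding h_def using holf into a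
    by (intro holomorphic_on_compose_gen[OF holf Moebius_function_holomorphic]) auto
  have h0: "h 0 = 0" by (simp add: h_def a_def Moebius_function_eq_zero)
  have into_h: "norm (h z) < 1" if "norm z < 1" for z
    using Moebius_function_norm_lt_1[OF a into[OF that]] by (simp add: h_def)
  have Schwarz: "norm (deriv h 0) \<le> 1" using Schwarz_Lemma(2)[OF holh h0 into_h, of 0] by simp
  have "(Moebius_function 0 a has_field_derivative 1 / (1 - cnj a * a)) (at (f 0))"
    unfolding Moebius_function_simple[abs_def] a_def[symmetric] using den
    by (auto intro!: derivative_eq_intros simp: divide_simps)
  then have "(h has_field_derivative 1 / (1 - cnj a * a) * deriv f 0) (at 0)"
    unfolding h_def by (rule DERIV_chain) (use holomorphic_derivI[OF holf] in simp)
  then have "deriv h 0 = 1 / of_real (1 - (norm a)\<^sup>2) * deriv f 0"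
    unfolding den_eq by (rule DERIV_imp_deriv)
  then have "norm (deriv f 0) / (1 - (norm a)\<^sup>2) \<le> 1"
    using Schwarz a2 by (simp add: norm_mult norm_divide del: of_real_diff of_real_power)
  then show ?thesis using a2 by (simp add: a_def divide_le_eq)
qed

lemma norm_deriv_0_le_of_Re_less:
  fixes f :: "complex \<Rightarrow> complex"
  assumes holf: "f holomorphic_on ball 0 1" and bound: "\<And>z. norm z < 1 \<Longrightarrow> Re (f z) < M"
  shows "norm (deriv f 0) \<le> 2 * (M - Re (f 0))"
proof -
  define A where "A = M - Re (f 0)"
  define q where "q z = f z - f 0" for z
  define h where "h z = q z / (q z - 2 * of_real A)" for z
  have A: "A > 0" using bound[of 0] by (simp add: A_def)
  have Re_q: "Re (q z) < A" if "norm z < 1" for z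
    using bound[OF that] by (simp add: q_def A_def)
  have den: "q z - 2 * of_real A \<noteq> 0" if "norm z < 1" for z
    using Re_q[OF that] A by (auto simp: complex_eq_iff)
  have holh: "h holomorphic_on ball 0 1"
    unfolding h_def q_def using holf den by (auto intro!: holomorphic_intros simp: q_def)
  have h0: "h 0 = 0" by (simp add: h_def q_def)
  \<comment> \<open>The Cayley-type map sends the half-plane Re w < A onto the unit disc.\<close>
  have into_h: "norm (h z) < 1" if "norm z < 1" for z
  proof -
    have "(norm (q z))\<^sup>2 < (norm (q z - 2 * of_real A))\<^sup>2"
      using Re_q[OF that] A unfolding cmod_power2 by (simp add: power2_eq_square algebra_simps)
    then have "norm (q z) < norm (q z - 2 * of_real A)"
      by (rule power2_less_imp_less) simp
    then show ?thesis using den[OF that] by (simp add: h_def norm_divide divide_less_eq)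
  qed
  have "(h has_field_derivative deriv f 0 / (- 2 * of_real A)) (at 0)"
    using holomorphic_derivI[OF holf, of 0] den[of 0] A unfolding h_def q_def
    by (auto intro!: derivative_eq_intros simp: divide_simps)
  then have "norm (deriv f 0) / (2 * A) \<le> 1"
    using Schwarz_Lemma(2)[OF holh h0 into_h, of 0] A by (simp add: DERIV_imp_deriv norm_divide)
  then show ?thesis using A by (simp add: A_def divide_le_eq)
qed

lemma norm_deriv_0_le_of_Re_less_ball:
  fixes f :: "complex \<Rightarrow> complex"
  assumes holf: "f holomorphic_on ball 0 R" and R: "R > 0"
    and bound: "\<And>z. norm z < R \<Longrightarrow> Re (f z) < M"
  shows "norm (deriv f 0) \<le> 2 * (M - Re (f 0)) / R"
proof -
  define g where "g z = f (of_real R * z)" for z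
  have scale: "norm (of_real R * z) < R \<longleftrightarrow> norm z < 1" for z :: complex
    using R by (simp add: norm_mult)
  have "g holomorphic_on ball 0 1"
    unfolding g_def using scale
    by (intro holomorphic_on_compose_gen[OF _ holf, unfolded o_def]) (auto intro!: holomorphic_intros)
  then have "norm (deriv g 0) \<le> 2 * (M - Re (g 0))"
    by (rule norm_deriv_0_le_of_Re_less) (use bound scale in \<open>simp add: g_def\<close>)
  moreover have "(g has_field_derivative deriv f 0 * of_real R) (at 0)"
    unfolding g_def using holomorphic_derivI[OF holf, of 0] R
    by (auto intro!: derivative_eq_intros DERIV_chain2[where f = f])
  ultimately show ?thesis
    using R by (simp add: DERIV_imp_deriv norm_mult g_def field_simps)
qed

lemma Schwarz_Lemma_second_order:
  fixes g :: "complex \<Rightarrow> complex"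
  assumes holg: "g holomorphic_on ball 0 1" and g0: "g 0 = 0"
    and into: "\<And>z. norm z < 1 \<Longrightarrow> norm (g z) < 1" and z: "norm z < 1"
  shows "norm (g z) \<le> norm z * (3 * norm z + norm (deriv g 0))"
proof -
  obtain h where holh: "h holomorphic_on ball 0 1" and g_eq: "\<And>z. norm z < 1 \<Longrightarrow> g z = z * h z"
    and h0: "deriv g 0 = h 0"
    using Schwarz3[OF holg g0] by blast
  have h_le: "norm (h w) \<le> 1" if w: "norm w < 1" for w
  proof (cases "w = 0")
    case True
    then show ?thesis using Schwarz_Lemma(2)[OF holg g0 into, of 0] h0 by simp
  next
    case False
    have "norm w * norm (h w) \<le> norm w * 1"
      using Schwarz_Lemma(1)[OF holg g0 into w] g_eq[OF w] by (simp add: norm_mult)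
    then show ?thesis using False by simp
  qed
  define k where "k w = (h w - h 0) / 3" for w
  have "k holomorphic_on ball 0 1" unfolding k_def using holh by (intro holomorphic_intros) auto
  moreover have "k 0 = 0" by (simp add: k_def)
  moreover have "norm (k w) < 1" if "norm w < 1" for w
  proof -
    have "norm (h w - h 0) \<le> 2"
      using norm_triangle_ineq4[of "h w" "h 0"] h_le[OF that] h_le[of 0] by simp
    then show ?thesis by (simp add: k_def norm_divide)
  qed
  ultimately have "norm (k z) \<le> norm z" using z by (rule Schwarz_Lemma(1))
  then have "norm (h z) \<le> 3 * norm z + norm (h 0)"
    using norm_triangle_ineq2[of "h z" "h 0"] by (simp add: k_def norm_divide)
  then show ?thesis using g_eq[OF z] h0 by (simp add: norm_mult mult_left_mono)
qed

text \<open>With the rotation u = cis (Arg (\<alpha> \<beta>)), the quadratic g w = \<beta> w + u w^2 / 2 vanishes at 0 and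
  at w0 = -2 \<beta> cnj u, where Re (\<alpha> w0) = -|\<alpha>| |w0|.  Near w0 the left-hand side is therefore
  \<le> 0, and away from w0 we have |g w| \<ge> |w|^2 / 4.\<close>
lemma Re_mult_le_sqrt_norm_quadratic:
  fixes \<alpha> \<beta> w :: complex
  assumes \<alpha>: "norm \<alpha> \<le> c / 2"
  shows "Re (\<alpha> * w) \<le> c * sqrt (norm (\<beta> * w + cis (Arg (\<alpha> * \<beta>)) * w\<^sup>2 / 2))"
proof -
  define u where "u = cis (Arg (\<alpha> * \<beta>))"
  define w\<^sub>0 where "w\<^sub>0 = - 2 * \<beta> * cnj u"
  have c: "c \<ge> 0" using \<alpha> norm_ge_zero[of \<alpha>] by linarith
  have "\<beta> * w + u * w\<^sup>2 / 2 = u / 2 * w * (w - w\<^sub>0)"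
    by (simp add: w\<^sub>0_def u_def cis_cnj cis_mult power2_eq_square algebra_simps)
  then have g_norm: "norm (\<beta> * w + u * w\<^sup>2 / 2) = norm w * norm (w - w\<^sub>0) / 2"
    by (simp only:) (simp add: u_def norm_mult norm_divide)
  have "cnj u * (\<alpha> * \<beta>) = cnj u * rcis (norm (\<alpha> * \<beta>)) (Arg (\<alpha> * \<beta>))"
    by (simp only: rcis_cmod_Arg)
  also have "\<dots> = of_real (norm (\<alpha> * \<beta>))"
    by (simp add: u_def rcis_def cis_cnj cis_mult mult.left_commute)
  finally have "\<alpha> * w\<^sub>0 = - 2 * of_real (norm (\<alpha> * \<beta>))"
    by (simp add: w\<^sub>0_def algebra_simps)
  moreover have "norm w\<^sub>0 = 2 * norm \<beta>" by (simp add: w\<^sub>0_def u_def norm_mult)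
  ultimately have Re_w\<^sub>0: "Re (\<alpha> * w\<^sub>0) = - norm \<alpha> * norm w\<^sub>0" by (simp add: norm_mult)
  show ?thesis
  proof (cases "norm (w - w\<^sub>0) \<le> norm w\<^sub>0")
    case True
    have "Re (\<alpha> * w) = Re (\<alpha> * w\<^sub>0) + Re (\<alpha> * (w - w\<^sub>0))" by (simp add: algebra_simps)
    also have "\<dots> \<le> - norm \<alpha> * norm w\<^sub>0 + norm \<alpha> * norm (w - w\<^sub>0)"
      using Re_w\<^sub>0 complex_Re_le_cmod[of "\<alpha> * (w - w\<^sub>0)"] by (simp add: norm_mult)
    also have "\<dots> \<le> 0" using True by (simp add: mult_left_mono)
    also have "\<dots> \<le> c * sqrt (norm (\<beta> * w + u * w\<^sup>2 / 2))" using c by simp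
    finally show ?thesis by (simp add: u_def)
  next
    case False
    have "norm w \<le> 2 * norm (w - w\<^sub>0)"
      using False norm_triangle_sub[of w w\<^sub>0] by linarith
    then have "(norm w / 2)\<^sup>2 \<le> norm (\<beta> * w + u * w\<^sup>2 / 2)"
      unfolding g_norm
      using mult_left_mono[of "norm w" "2 * norm (w - w\<^sub>0)" "norm w"] by (simp add: power2_eq_square)
    then have sqrt_ge: "norm w / 2 \<le> sqrt (norm (\<beta> * w + u * w\<^sup>2 / 2))" by (rule real_le_rsqrt)
    have "Re (\<alpha> * w) \<le> norm \<alpha> * norm w" using complex_Re_le_cmod[of "\<alpha> * w"] by (simp add: norm_mult)
    also have "\<dots> \<le> c / 2 * norm w" using \<alpha> by (rule mult_right_mono) simp
    also have "\<dots> \<le> c * sqrt (norm (\<beta> * w + u * w\<^sup>2 / 2))" using mult_left_mono[OF sqrt_ge c] by simp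
    finally show ?thesis by (simp add: u_def)
  qed
qed

definition kobayashi_disc ::
    "(complex \<times> complex) set \<Rightarrow> complex \<times> complex \<Rightarrow> complex \<times> complex \<Rightarrow> real \<Rightarrow> (complex \<Rightarrow> complex \<times> complex) \<Rightarrow> bool"
  where "kobayashi_disc \<Omega> z X r \<phi> \<longleftrightarrow>
    (\<lambda>w. fst (\<phi> w)) holomorphic_on ball 0 1 \<and> (\<lambda>w. snd (\<phi> w)) holomorphic_on ball 0 1 \<and>
    \<phi> ` ball 0 1 \<subseteq> \<Omega> \<and> \<phi> 0 = z \<and>
    deriv (\<lambda>w. fst (\<phi> w)) 0 = complex_of_real r * fst X \<and>
    deriv (\<lambda>w. snd (\<phi> w)) 0 = complex_of_real r * snd X"

lemma kobayashi_eq_Inf_discs: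
  "kobayashi \<Omega> z X = Inf {1 / r | r. r > 0 \<and> (\<exists>\<phi>. kobayashi_disc \<Omega> z X r \<phi>)}"
  by (simp add: kobayashi_def kobayashi_disc_def)

lemma kobayashi_le_inverse:
  assumes "r > 0" and "kobayashi_disc \<Omega> z X r \<phi>"
  shows "kobayashi \<Omega> z X \<le> 1 / r"
  unfolding kobayashi_eq_Inf_discs
  by (rule cInf_lower) (use assms in \<open>auto intro!: bdd_belowI[of _ 0]\<close>)

lemma kobayashi_ge:
  assumes "\<exists>r \<phi>. r > 0 \<and> kobayashi_disc \<Omega> z X r \<phi>"
    and "\<And>r \<phi>. r > 0 \<Longrightarrow> kobayashi_disc \<Omega> z X r \<phi> \<Longrightarrow> B \<le> 1 / r"
  shows "B \<le> kobayashi \<Omega> z X"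
  unfolding kobayashi_eq_Inf_discs by (rule cInf_greatest) (use assms in auto)

lemma kobayashi_le_of_discs:
  assumes \<rho>: "\<rho> > 0" and M: "M \<ge> 0"
    and discs: "\<And>r. r > 0 \<Longrightarrow> r * M \<le> \<rho> \<Longrightarrow> \<exists>\<phi>. kobayashi_disc \<Omega> z X r \<phi>"
  shows "kobayashi \<Omega> z X \<le> M / \<rho>"
proof (cases "M = 0")
  case True
  have "kobayashi \<Omega> z X \<le> 1 / r" if "r > 0" for r
    using discs[OF that] that True \<rho> by (auto intro: kobayashi_le_inverse)
  then have "kobayashi \<Omega> z X \<le> 0 + e" if "e > 0" for e
    using that by (metis add_0 inverse_eq_divide inverse_inverse_eq inverse_positive_iff_positive)
  then have "kobayashi \<Omega> z X \<le> 0" by (rule field_le_epsilon)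
  then show ?thesis using True by simp
next
  case False
  then have "\<rho> / M > 0" using \<rho> M by simp
  moreover obtain \<phi> where "kobayashi_disc \<Omega> z X (\<rho> / M) \<phi>" using discs[OF calculation] False by auto
  ultimately show ?thesis by (auto dest: kobayashi_le_inverse)
qed

lemma kobayashi_disc_exists:
  assumes "e > 0" and "ball z e \<subseteq> \<Omega>"
  shows "\<exists>r \<phi>. r > 0 \<and> kobayashi_disc \<Omega> z X r \<phi>"
proof -
  define r where "r = e / (1 + norm X)"
  define \<phi> where "\<phi> w = z + (of_real r * w * fst X, of_real r * w * snd X)" for w
  have r: "r > 0" using assms by (simp add: r_def add_pos_nonneg)
  have "dist z (\<phi> w) < e" if "norm w < 1" for w
  proof -
    have "dist z (\<phi> w) = r * norm w * norm X"
      by (simp add: \<phi>_def dist_norm norm_Pair norm_mult abs_of_pos[OF r] power_mult_distrib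
          real_sqrt_mult distrib_left[symmetric] norm_prod_def)
    also have "\<dots> \<le> r * norm X" using that r by (simp add: mult_left_le_one_le)
    also have "\<dots> < e" using assms by (simp add: r_def divide_simps add_pos_nonneg)
    finally show ?thesis .
  qed
  moreover have "((\<lambda>w. fst (\<phi> w)) has_field_derivative of_real r * fst X) (at 0)"
    "((\<lambda>w. snd (\<phi> w)) has_field_derivative of_real r * snd X) (at 0)"
    unfolding \<phi>_def by (auto intro!: derivative_eq_intros)
  ultimately have "kobayashi_disc \<Omega> z X r \<phi>"
    using assms(2) unfolding kobayashi_disc_def
    by (auto simp: \<phi>_def DERIV_imp_deriv zero_prod_def intro!: holomorphic_intros)
  then show ?thesis using r by blast
qed

lemma ball_p_delta_subset_G_psi:
  assumes "0 < \<delta>" "\<delta> < 1" and nonneg: "\<forall>x\<in>{0..1}. \<psi> x \<ge> 0"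
  shows "ball (p_delta \<delta>) (min \<delta> (1 - \<delta>)) \<subseteq> G_psi \<psi>"
proof
  fix z assume "z \<in> ball (p_delta \<delta>) (min \<delta> (1 - \<delta>))"
  then have fst_close: "dist (fst z) (- of_real \<delta>) < min \<delta> (1 - \<delta>)"
    and snd_close: "norm (snd z) < min \<delta> (1 - \<delta>)"
    using dist_fst_le[of "p_delta \<delta>" z] dist_snd_le[of "p_delta \<delta>" z]
    by (auto simp: p_delta_def dist_commute)
  have "norm (fst z) < 1"
    using fst_close norm_triangle_ineq2[of "fst z" "- of_real \<delta>"] assms by (simp add: dist_norm)
  moreover have "Re (fst z) < 0"
    using fst_close abs_Re_le_cmod[of "fst z + of_real \<delta>"] by (simp add: dist_norm) arith
  moreover have "\<psi> (norm (snd z)) \<ge> 0" using nonneg snd_close by simp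
  ultimately show "z \<in> G_psi \<psi>" using snd_close by (simp add: G_psi_def)
qed

lemma kobayashi_disc_G_psi_exists:
  assumes "0 < \<delta>" "\<delta> < 1" and "\<forall>x\<in>{0..1}. \<psi> x \<ge> 0"
  shows "\<exists>r \<phi>. r > 0 \<and> kobayashi_disc (G_psi \<psi>) (p_delta \<delta>) X r \<phi>"
  using kobayashi_disc_exists[OF _ ball_p_delta_subset_G_psi[OF assms]] assms by simp

lemma kobayashi_disc_G_psiD:
  assumes "kobayashi_disc (G_psi \<psi>) (p_delta \<delta>) X r \<phi>"
  defines "f \<equiv> \<lambda>w. fst (\<phi> w)" and "g \<equiv> \<lambda>w. snd (\<phi> w)"
  shows "f holomorphic_on ball 0 1" "g holomorphic_on ball 0 1"
    and "\<And>w. norm w < 1 \<Longrightarrow> norm (f w) < 1" "\<And>w. norm w < 1 \<Longrightarrow> norm (g w) < 1"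
    and "\<And>w. norm w < 1 \<Longrightarrow> Re (f w) < \<psi> (norm (g w))"
    and "f 0 = - of_real \<delta>" "g 0 = 0"
    and "deriv f 0 = of_real r * fst X" "deriv g 0 = of_real r * snd X"
  using assms by (fastforce simp: kobayashi_disc_def G_psi_def p_delta_def)+

lemma kobayashi_disc_G_psi_deriv_le:
  assumes disc: "kobayashi_disc (G_psi \<psi>) (p_delta \<delta>) X r \<phi>" and r: "r > 0"
  shows "r * norm (fst X) \<le> 1" "r * norm (snd X) \<le> 1"
proof -
  note D = kobayashi_disc_G_psiD[OF disc]
  have "norm (deriv (\<lambda>w. fst (\<phi> w)) 0) \<le> 1"
    using order_trans[OF Schwarz_Pick_deriv_0[OF D(1,3)]] by simp
  then show "r * norm (fst X) \<le> 1" using D(8) r by (simp add: norm_mult)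
  have "norm (deriv (\<lambda>w. snd (\<phi> w)) 0) \<le> 1"
    using Schwarz_Lemma(2)[OF D(2,7,4), of 0] by simp
  then show "r * norm (snd X) \<le> 1" using D(9) r by (simp add: norm_mult)
qed

lemma G_psi_kobayashi_ge_max:
  assumes "0 < \<delta>" "\<delta> < 1" and "\<forall>x\<in>{0..1}. \<psi> x \<ge> 0"
  shows "max (norm (fst X)) (norm (snd X)) \<le> kobayashi (G_psi \<psi>) (p_delta \<delta>) X"
proof (rule kobayashi_ge[OF kobayashi_disc_G_psi_exists[OF assms]])
  fix r \<phi> assume "r > 0" and "kobayashi_disc (G_psi \<psi>) (p_delta \<delta>) X r \<phi>"
  then show "max (norm (fst X)) (norm (snd X)) \<le> 1 / r"
    using kobayashi_disc_G_psi_deriv_le by (simp add: pos_le_divide_eq mult.commute)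
qed

lemma kobayashi_disc_G_psi_sqrt:
  assumes c\<^sub>0: "\<forall>x\<in>{0..1}. \<psi> x \<ge> c\<^sub>0 * sqrt x" and \<delta>: "0 < \<delta>" "\<delta> < 1"
    and \<rho>: "\<rho> \<le> c\<^sub>0 / 2" "\<rho> \<le> (1 - \<delta>) / 2"
    and r: "r \<ge> 0" "r * norm (fst X) \<le> \<rho>" "r * norm (snd X) \<le> \<rho>"
  shows "\<exists>\<phi>. kobayashi_disc (G_psi \<psi>) (p_delta \<delta>) X r \<phi>"
proof -
  define \<alpha> where "\<alpha> = of_real r * fst X"
  define \<beta> where "\<beta> = of_real r * snd X"
  define u where "u = cis (Arg (\<alpha> * \<beta>))"
  define \<phi> where "\<phi> w = (- of_real \<delta> + \<alpha> * w, \<beta> * w + u * w\<^sup>2 / 2)" for w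
  have \<alpha>\<beta>: "norm \<alpha> \<le> \<rho>" "norm \<beta> \<le> \<rho>" using r by (simp_all add: \<alpha>_def \<beta>_def norm_mult)
  have "\<phi> w \<in> G_psi \<psi>" if w: "norm w < 1" for w
  proof -
    have lin: "norm (\<alpha> * w) \<le> \<rho>" "norm (\<beta> * w) \<le> \<rho>"
      using mult_mono[OF \<alpha>\<beta>(1), of "norm w" 1] mult_mono[OF \<alpha>\<beta>(2), of "norm w" 1] \<alpha>\<beta> w
        norm_ge_zero[of \<alpha>]
      by (auto simp: norm_mult)
    have "norm (u * w\<^sup>2 / 2) < 1 / 2"
      using w by (simp add: u_def norm_mult norm_power power_less_one_iff)
    then have g: "norm (snd (\<phi> w)) < 1"
      using lin(2) \<rho> \<delta> norm_triangle_ineq[of "\<beta> * w" "u * w\<^sup>2 / 2"] by (simp add: \<phi>_def)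
    have f: "norm (fst (\<phi> w)) < 1"
      using lin(1) \<rho> \<delta> norm_triangle_ineq[of "- of_real \<delta>" "\<alpha> * w"] by (simp add: \<phi>_def)
    have "Re (\<alpha> * w) \<le> c\<^sub>0 * sqrt (norm (snd (\<phi> w)))"
      using Re_mult_le_sqrt_norm_quadratic[of \<alpha> c\<^sub>0 w \<beta>] \<alpha>\<beta> \<rho> by (simp add: \<phi>_def u_def)
    moreover have "c\<^sub>0 * sqrt (norm (snd (\<phi> w))) \<le> \<psi> (norm (snd (\<phi> w)))" using c\<^sub>0 g by simp
    moreover have "Re (fst (\<phi> w)) = Re (\<alpha> * w) - \<delta>" by (simp add: \<phi>_def)
    ultimately have "Re (fst (\<phi> w)) < \<psi> (norm (snd (\<phi> w)))" using \<delta> by linarith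
    then show ?thesis using f g by (simp add: G_psi_def)
  qed
  moreover have "((\<lambda>w. fst (\<phi> w)) has_field_derivative \<alpha>) (at 0)"
    "((\<lambda>w. snd (\<phi> w)) has_field_derivative \<beta>) (at 0)"
    unfolding \<phi>_def by (auto intro!: derivative_eq_intros)
  ultimately have "kobayashi_disc (G_psi \<psi>) (p_delta \<delta>) X r \<phi>"
    unfolding kobayashi_disc_def
    by (auto simp: \<phi>_def p_delta_def \<alpha>_def \<beta>_def DERIV_imp_deriv intro!: holomorphic_intros)
  then show ?thesis by blast
qed

lemma G_psi_kobayashi_le_sqrt:
  assumes c\<^sub>0: "\<forall>x\<in>{0..1}. \<psi> x \<ge> c\<^sub>0 * sqrt x" and \<delta>: "0 < \<delta>" "\<delta> < 1"
    and \<rho>: "0 < \<rho>" "\<rho> \<le> c\<^sub>0 / 2" "\<rho> \<le> (1 - \<delta>) / 2"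
  shows "kobayashi (G_psi \<psi>) (p_delta \<delta>) X \<le> max (norm (fst X)) (norm (snd X)) / \<rho>"
  by (rule kobayashi_le_of_discs[OF \<rho>(1)])
    (use kobayashi_disc_G_psi_sqrt[OF c\<^sub>0 \<delta> \<rho>(2,3)] in \<open>auto simp: max_mult_distrib_left le_max_iff_disj\<close>)

text \<open>On the disc |z| < R the second component stays below s by the second-order Schwarz lemma,
  so the first component satisfies Re f < \<psi> s there.\<close>
lemma kobayashi_disc_G_psi_fst_deriv_le:
  assumes disc: "kobayashi_disc (G_psi \<psi>) (p_delta \<delta>) X r \<phi>" and r: "r \<ge> 0"
    and mono: "mono_on {0..1} \<psi>" and R: "0 < R" "R \<le> 1"
    and s: "s \<le> 1" "R * (3 * R + r * norm (snd X)) \<le> s"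
  shows "r * norm (fst X) \<le> 2 * (\<psi> s + \<delta>) / R"
proof -
  define f where "f w = fst (\<phi> w)" for w
  define g where "g w = snd (\<phi> w)" for w
  note D = kobayashi_disc_G_psiD[OF disc, folded f_def g_def]
  have "Re (f z) < \<psi> s" if z: "norm z < R" for z
  proof -
    have z1: "norm z < 1" using z R by linarith
    have "norm (g z) \<le> norm z * (3 * norm z + norm (deriv g 0))"
      by (rule Schwarz_Lemma_second_order[OF D(2,7,4) z1])
    also have "\<dots> \<le> R * (3 * R + r * norm (snd X))"
      using z r R by (intro mult_mono add_mono) (auto simp: D(9) norm_mult)
    finally have g_le: "norm (g z) \<le> s" using s by linarith
    have "\<psi> (norm (g z)) \<le> \<psi> s"
      by (rule mono_onD[OF mono]) (use g_le s order_trans[OF norm_ge_zero g_le] in auto)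
    then show ?thesis using D(5)[OF z1] by linarith
  qed
  moreover have "f holomorphic_on ball 0 R"
    by (rule holomorphic_on_subset[OF D(1)]) (use R in \<open>simp add: subset_ball\<close>)
  ultimately have "norm (deriv f 0) \<le> 2 * (\<psi> s - Re (f 0)) / R"
    using R by (intro norm_deriv_0_le_of_Re_less_ball) auto
  then show ?thesis using r by (simp add: D(6,8) norm_mult)
qed

text \<open>Two choices of radius: R = sqrt y / 4 with target s = y, and R = t / 4 with s = t^2.\<close>
lemma kobayashi_disc_G_psi_fst_deriv_cases:
  assumes disc: "kobayashi_disc (G_psi \<psi>) (p_delta \<delta>) X r \<phi>" and r: "r > 0"
    and mono: "mono_on {0..1} \<psi>" and y: "0 < y" "y \<le> 1" "\<psi> y = \<delta>"
    and t: "0 \<le> t" "t \<le> 1" "norm (snd X) \<le> t * norm (fst X)"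
  shows "r * norm (fst X) \<le> 16 * \<delta> / sqrt y \<or> (\<delta> \<le> \<psi> (t\<^sup>2) \<and> r * norm (fst X) \<le> 16 * \<psi> (t\<^sup>2) / t)"
proof -
  have "r * norm (snd X) \<le> t * (r * norm (fst X))" using t r by (simp add: mult.left_commute)
  also have "\<dots> \<le> t" using kobayashi_disc_G_psi_deriv_le(1)[OF disc r] t by (simp add: mult_left_le)
  finally have snd_le: "r * norm (snd X) \<le> t" .
  note fst_le = kobayashi_disc_G_psi_fst_deriv_le[OF disc less_imp_le[OF r] mono]
  show ?thesis
  proof (cases "t \<le> sqrt y")
    case True
    have "0 < sqrt y" "sqrt y \<le> 1" using y by simp_all
    then have R: "0 < sqrt y / 4" "sqrt y / 4 \<le> 1" by linarith+
    have "sqrt y / 4 * (3 * (sqrt y / 4) + r * norm (snd X)) \<le> sqrt y / 4 * (3 * (sqrt y / 4) + sqrt y)"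
      using snd_le True y by (intro mult_left_mono add_left_mono) auto
    also have "\<dots> = 7 / 16 * (sqrt y)\<^sup>2" by (simp add: power2_eq_square field_simps)
    also have "\<dots> \<le> y" using y by simp
    finally have "r * norm (fst X) \<le> 2 * (\<psi> y + \<delta>) / (sqrt y / 4)"
      by (rule fst_le[OF R y(2)])
    then show ?thesis using y by (simp add: field_simps)
  next
    case False
    then have t_pos: "t > 0" using real_sqrt_ge_zero[of y] y by linarith
    have "y = (sqrt y)\<^sup>2" using y by simp
    also have "\<dots> \<le> t\<^sup>2" using False y by (intro power_mono) auto
    finally have "\<psi> y \<le> \<psi> (t\<^sup>2)"
      by (rule mono_onD[OF mono, rotated 2]) (use y t in \<open>auto simp: power_le_one\<close>)
    then have \<delta>_le: "\<delta> \<le> \<psi> (t\<^sup>2)" using y by simp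
    have "t / 4 * (3 * (t / 4) + r * norm (snd X)) \<le> t / 4 * (3 * (t / 4) + t)"
      using snd_le t_pos by (intro mult_left_mono add_left_mono) auto
    also have "\<dots> \<le> t\<^sup>2" by (simp add: power2_eq_square field_simps)
    finally have "r * norm (fst X) \<le> 2 * (\<psi> (t\<^sup>2) + \<delta>) / (t / 4)"
      using t t_pos by (intro fst_le) (auto simp: power_le_one)
    also have "\<dots> \<le> 16 * \<psi> (t\<^sup>2) / t" using \<delta>_le t_pos by (simp add: field_simps)
    finally show ?thesis using \<delta>_le by blast
  qed
qed

lemma G_psi_kobayashi_le_uniform:
  assumes c\<^sub>0: "c\<^sub>0 > 0" "\<forall>x\<in>{0..1}. \<psi> x \<ge> c\<^sub>0 * sqrt x" and \<delta>\<^sub>0: "\<delta>\<^sub>0 < 1"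
  shows "\<exists>C \<ge> 1. \<forall>\<delta>\<in>{0<..\<delta>\<^sub>0}. \<forall>X.
    kobayashi (G_psi \<psi>) (p_delta \<delta>) X \<le> C * max (norm (fst X)) (norm (snd X))"
proof -
  define \<rho> where "\<rho> = min (c\<^sub>0 / 2) ((1 - \<delta>\<^sub>0) / 2)"
  have \<rho>: "0 < \<rho>" "\<rho> \<le> c\<^sub>0 / 2" "\<rho> \<le> (1 - \<delta>\<^sub>0) / 2" using c\<^sub>0 \<delta>\<^sub>0 by (auto simp: \<rho>_def min_def)
  have "kobayashi (G_psi \<psi>) (p_delta \<delta>) X \<le> max 1 (1 / \<rho>) * max (norm (fst X)) (norm (snd X))"
    if "\<delta> \<in> {0<..\<delta>\<^sub>0}" for \<delta> X
  proof -
    have \<delta>: "0 < \<delta>" "\<delta> < 1" "\<rho> \<le> (1 - \<delta>) / 2" using that \<delta>\<^sub>0 \<rho>(3) by auto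
    have "kobayashi (G_psi \<psi>) (p_delta \<delta>) X \<le> max (norm (fst X)) (norm (snd X)) / \<rho>"
      using G_psi_kobayashi_le_sqrt[OF c\<^sub>0(2) \<delta>(1,2) \<rho>(1,2) \<delta>(3)] .
    also have "\<dots> = 1 / \<rho> * max (norm (fst X)) (norm (snd X))" by simp
    also have "\<dots> \<le> max 1 (1 / \<rho>) * max (norm (fst X)) (norm (snd X))"
      by (intro mult_right_mono) (auto simp: le_max_iff_disj)
    finally show ?thesis .
  qed
  then show ?thesis by (intro exI[of _ "max 1 (1 / \<rho>)"]) auto
qed

lemma the_inv_into_strict_mono_on_IVT:
  fixes f :: "real \<Rightarrow> real"
  assumes "continuous_on {a..b} f" "strict_mono_on {a..b} f" "a \<le> b" "f a \<le> c" "c \<le> f b"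
  shows "the_inv_into {a..b} f c \<in> {a..b}" "f (the_inv_into {a..b} f c) = c"
proof -
  obtain x where "x \<in> {a..b}" "f x = c" using IVT'[of f a c b] assms by auto
  moreover have "inj_on f {a..b}" using assms(2) by (rule strict_mono_on_imp_inj_on)
  ultimately show "the_inv_into {a..b} f c \<in> {a..b}" "f (the_inv_into {a..b} f c) = c"
    using the_inv_into_f_f by fastforce+
qed

lemma G_psi_kobayashi_ge_F2:
  assumes cont: "continuous_on {0..1} \<psi>" and sm: "strict_mono_on {0..1} \<psi>" and psi0: "\<psi> 0 = 0"
    and \<delta>: "0 < \<delta>" "\<delta> < 1" "\<delta> \<le> \<psi> 1"
    and X: "fst X \<noteq> 0" "norm (snd X) \<le> norm (fst X)"
  shows "F2 \<psi> \<delta> (norm (snd X / fst X)) * norm (fst X) / 16 \<le> kobayashi (G_psi \<psi>) (p_delta \<delta>) X"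
proof -
  define y where "y = the_inv_into {0..1} \<psi> \<delta>"
  define t where "t = norm (snd X / fst X)"
  have "y \<in> {0..1}" "\<psi> y = \<delta>"
    unfolding y_def using the_inv_into_strict_mono_on_IVT[OF cont sm] psi0 \<delta> by auto
  moreover from this have "y \<noteq> 0" using psi0 \<delta> by auto
  ultimately have y: "0 < y" "y \<le> 1" "\<psi> y = \<delta>" by auto
  have mono: "mono_on {0..1} \<psi>" using sm by (rule strict_mono_on_imp_mono_on)
  have nonneg: "\<forall>x\<in>{0..1}. \<psi> x \<ge> 0" using mono_onD[OF mono] psi0 by force
  have t: "0 \<le> t" "t \<le> 1" "norm (snd X) \<le> t * norm (fst X)"
    using X by (simp_all add: t_def norm_divide divide_le_eq)
  have F2_le: "F2 \<psi> \<delta> t \<le> sqrt y / \<delta>" "\<psi> (t\<^sup>2) \<noteq> 0 \<Longrightarrow> F2 \<psi> \<delta> t \<le> t / \<psi> (t\<^sup>2)"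
    by (simp_all add: F2_def Let_def y_def)
  show ?thesis
    unfolding t_def[symmetric]
  proof (rule kobayashi_ge[OF kobayashi_disc_G_psi_exists[OF \<delta>(1,2) nonneg]])
    fix r \<phi> assume r: "r > 0" and disc: "kobayashi_disc (G_psi \<psi>) (p_delta \<delta>) X r \<phi>"
    have "F2 \<psi> \<delta> t * (r * norm (fst X)) \<le> 16"
      using kobayashi_disc_G_psi_fst_deriv_cases[OF disc r mono y t]
    proof
      assume "r * norm (fst X) \<le> 16 * \<delta> / sqrt y"
      then have "F2 \<psi> \<delta> t * (r * norm (fst X)) \<le> sqrt y / \<delta> * (16 * \<delta> / sqrt y)"
        using F2_le(1) r y \<delta> by (intro mult_mono) auto
      then show ?thesis using y \<delta> by simp
    next
      assume large_t: "\<delta> \<le> \<psi> (t\<^sup>2) \<and> r * norm (fst X) \<le> 16 * \<psi> (t\<^sup>2) / t"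
      then have "F2 \<psi> \<delta> t * (r * norm (fst X)) \<le> t / \<psi> (t\<^sup>2) * (16 * \<psi> (t\<^sup>2) / t)"
        using F2_le(2) r t \<delta> by (intro mult_mono) auto
      then show ?thesis using large_t \<delta> by (cases "t = 0") auto
    qed
    then show "F2 \<psi> \<delta> t * norm (fst X) / 16 \<le> 1 / r"
      using r by (simp add: field_simps)
  qed
qed

theorem proposition3:
  fixes \<psi> :: "real \<Rightarrow> real" and \<delta>\<^sub>0 :: real
  assumes cont: "continuous_on {0..1} \<psi>"
    and nonneg: "\<forall>x\<in>{0..1}. \<psi> x \<ge> 0"
    and psi0: "\<psi> 0 = 0" and psi1: "\<psi> 1 > 0"
    and d0: "0 < \<delta>\<^sub>0" "\<delta>\<^sub>0 < 1" "\<delta>\<^sub>0 < \<psi> 1"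
  shows
    "((\<exists>c\<^sub>0 > 0. \<forall>x\<in>{0..1}. \<psi> x \<ge> c\<^sub>0 * sqrt x) \<longrightarrow>
       (\<exists>C \<ge> 1. \<forall>\<delta>\<in>{0<..\<delta>\<^sub>0}. \<forall>X :: complex \<times> complex.
          max (norm (fst X)) (norm (snd X)) \<le> kobayashi (G_psi \<psi>) (p_delta \<delta>) X \<and>
          kobayashi (G_psi \<psi>) (p_delta \<delta>) X \<le> C * max (norm (fst X)) (norm (snd X))))
     \<and>
     ((mono_on {0<..<1} (\<lambda>x. \<psi> x / sqrt x) \<and> strict_mono_on {0..1} \<psi>) \<longrightarrow>
       (\<exists>c > 0. \<forall>\<delta>\<in>{0<..\<delta>\<^sub>0}. \<forall>X :: complex \<times> complex.
          fst X \<noteq> 0 \<and> norm (snd X) \<le> norm (fst X) \<longrightarrow>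
          c * F2 \<psi> \<delta> (norm (snd X / fst X)) * norm (fst X)
            \<le> kobayashi (G_psi \<psi>) (p_delta \<delta>) X))"
proof (intro conjI impI)
  assume "\<exists>c\<^sub>0 > 0. \<forall>x\<in>{0..1}. \<psi> x \<ge> c\<^sub>0 * sqrt x"
  then obtain C where "C \<ge> 1" and "\<forall>\<delta>\<in>{0<..\<delta>\<^sub>0}. \<forall>X.
      kobayashi (G_psi \<psi>) (p_delta \<delta>) X \<le> C * max (norm (fst X)) (norm (snd X))"
    using G_psi_kobayashi_le_uniform d0(2) by blast
  moreover have "\<forall>\<delta>\<in>{0<..\<delta>\<^sub>0}. \<forall>X.
      max (norm (fst X)) (norm (snd X)) \<le> kobayashi (G_psi \<psi>) (p_delta \<delta>) X"
    using G_psi_kobayashi_ge_max[OF _ _ nonneg] d0 by auto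
  ultimately show "\<exists>C \<ge> 1. \<forall>\<delta>\<in>{0<..\<delta>\<^sub>0}. \<forall>X.
      max (norm (fst X)) (norm (snd X)) \<le> kobayashi (G_psi \<psi>) (p_delta \<delta>) X \<and>
      kobayashi (G_psi \<psi>) (p_delta \<delta>) X \<le> C * max (norm (fst X)) (norm (snd X))"
    by blast
next
  assume "mono_on {0<..<1} (\<lambda>x. \<psi> x / sqrt x) \<and> strict_mono_on {0..1} \<psi>"
  then have "strict_mono_on {0..1} \<psi>" by blast
  then show "\<exists>c > 0. \<forall>\<delta>\<in>{0<..\<delta>\<^sub>0}. \<forall>X.
      fst X \<noteq> 0 \<and> norm (snd X) \<le> norm (fst X) \<longrightarrow>
      c * F2 \<psi> \<delta> (norm (snd X / fst X)) * norm (fst X) \<le> kobayashi (G_psi \<psi>) (p_delta \<delta>) X"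
    using G_psi_kobayashi_ge_F2[OF cont _ psi0] d0 by (intro exI[of _ "1/16"]) force
qed

end
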